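(* Let $\mathbf{V}\in\mathbb{R}^{n\times(k+1)}$ have orthonormal columns and suppose $\mathbf{W}\in\mathbb{R}^{k\times(k+1)}$ satisfies $$\max_{i\in[n]}\Big\{\min_{l\in[k]}\|\mathbf{V}_{i,:}-\mathbf{W}_{l,:}\|\Big\}=\epsilon.$$ Then $\epsilon\ge(3n(k+1)^2)^{-1}$.
   Context: $[n]=\{1,\dots,n\}$; $\|\cdot\|$ is the Euclidean norm; $\mathbf{V}_{i,:}$ denotes the $i$-th row of $\mathbf{V}$. *)

theory Defs
  imports Complex_Main
begin

text \<open>Matrices are represented as functions nat => nat => real, entry (i,j),
  with 0-based indices.  V is n x (k+1), W is k x (k+1).\<close>

definition orthonormal_columns :: "nat \<Rightarrow> nat \<Rightarrow> (nat \<Rightarrow> nat \<Rightarrow> real) \<Rightarrow> bool" where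
  "orthonormal_columns n m V \<longleftrightarrow>
     (\<forall>j<m. \<forall>j'<m. (\<Sum>i<n. V i j * V i j') = (if j = j' then 1 else 0))"

definition row_dist :: "nat \<Rightarrow> (nat \<Rightarrow> nat \<Rightarrow> real) \<Rightarrow> nat \<Rightarrow> (nat \<Rightarrow> nat \<Rightarrow> real) \<Rightarrow> nat \<Rightarrow> real" where
  "row_dist m V i W l = sqrt (\<Sum>j<m. (V i j - W l j)\<^sup>2)"

end

theory Submission
  imports Defs "Jordan_Normal_Form.Determinant" "HOL-Analysis.Convex"
begin

text \<open>Since \<open>W\<close> has fewer rows than columns, some unit vector \<open>x\<close> satisfies \<open>W x = 0\<close>.
  Orthonormality of the columns of \<open>V\<close> gives \<open>\<parallel>V x\<parallel> = \<parallel>x\<parallel> = 1\<close>, while for the row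
  \<open>W\<^sub>l\<close> closest to \<open>V\<^sub>i\<close> Cauchy-Schwarz gives \<open>\<bar>(V x)\<^sub>i\<bar> = \<bar>(V\<^sub>i - W\<^sub>l) x\<bar> \<le> \<epsilon>\<close>.
  Hence \<open>1 \<le> n \<epsilon>\<^sup>2\<close>, so even \<open>\<epsilon> \<ge> 1/\<surd>n\<close>.\<close>

lemma homogeneous_system_nontrivial_solution:
  fixes W :: "nat \<Rightarrow> nat \<Rightarrow> 'a::idom"
  assumes "k < m"
  shows "\<exists>x. (\<exists>j<m. x j \<noteq> 0) \<and> (\<forall>l<k. (\<Sum>j<m. W l j * x j) = 0)"
proof -
  define c where "c = (\<lambda>i. if i < k then vec m (W i) else 0\<^sub>v m)"
  define A where "A = mat\<^sub>r m m (\<lambda>i. if i = k then 0\<^sub>v m else c i)"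
  have A: "A \<in> carrier_mat m m" unfolding A_def by auto
  have "det A = 0" unfolding A_def by (rule det_row_0) (auto simp: c_def assms)
  then obtain v where v: "v \<in> carrier_vec m" "v \<noteq> 0\<^sub>v m" "A *\<^sub>v v = 0\<^sub>v m"
    using det_0_iff_vec_prod_zero[OF A] by blast
  have "\<exists>j<m. v $ j \<noteq> 0"
  proof (rule ccontr)
    assume "\<not> ?thesis"
    then have "v = 0\<^sub>v m" using v(1) by (intro eq_vecI) auto
    with v(2) show False by simp
  qed
  moreover have "(\<Sum>j<m. W l j * v $ j) = 0" if "l < k" for l
  proof -
    have "(\<Sum>j<m. W l j * v $ j) = row A l \<bullet> v"
      using that assms v(1) unfolding A_def c_def scalar_prod_def
      by (auto intro!: sum.cong simp: lessThan_atLeast0)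
    also have "\<dots> = (A *\<^sub>v v) $ l" using A that assms by simp
    finally show ?thesis using v(3) that assms by simp
  qed
  ultimately show ?thesis by (intro exI[of _ "\<lambda>j. v $ j"]) auto
qed

lemma orthonormal_columns_sum_square_eq:
  assumes "orthonormal_columns n m V"
  shows "(\<Sum>i<n. (\<Sum>j<m. V i j * x j)\<^sup>2) = (\<Sum>j<m. (x j)\<^sup>2)"
proof -
  have "(\<Sum>i<n. (\<Sum>j<m. V i j * x j)\<^sup>2) = (\<Sum>i<n. \<Sum>j<m. \<Sum>j'<m. x j * x j' * (V i j * V i j'))"
    unfolding power2_eq_square sum_product by (intro sum.cong refl) (simp add: algebra_simps)
  also have "\<dots> = (\<Sum>j<m. \<Sum>j'<m. x j * x j' * (\<Sum>i<n. V i j * V i j'))"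
    by (simp add: sum.swap[of _ "{..<n}"] sum_distrib_left)
  also have "\<dots> = (\<Sum>j<m. \<Sum>j'<m. if j' = j then x j * x j else 0)"
    using assms unfolding orthonormal_columns_def by (intro sum.cong refl) auto
  also have "\<dots> = (\<Sum>j<m. (x j)\<^sup>2)" by (simp add: power2_eq_square)
  finally show ?thesis .
qed

lemma row_dist_nonneg: "0 \<le> row_dist m V i W l"
  unfolding row_dist_def by (intro real_sqrt_ge_zero sum_nonneg) auto

lemma square_sum_mult_le_row_dist:
  assumes "(\<Sum>j<m. W l j * x j) = 0" and "row_dist m V i W l \<le> \<epsilon>"
  shows "(\<Sum>j<m. V i j * x j)\<^sup>2 \<le> \<epsilon>\<^sup>2 * (\<Sum>j<m. (x j)\<^sup>2)"
proof -
  have "(\<Sum>j<m. V i j * x j) = (\<Sum>j<m. (V i j - W l j) * x j)"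
    using assms(1) by (simp add: sum_subtractf left_diff_distrib)
  then have "(\<Sum>j<m. V i j * x j)\<^sup>2 \<le> (\<Sum>j<m. (V i j - W l j)\<^sup>2) * (\<Sum>j<m. (x j)\<^sup>2)"
    by (simp add: Cauchy_Schwarz_ineq_sum)
  also have "(\<Sum>j<m. (V i j - W l j)\<^sup>2) = (row_dist m V i W l)\<^sup>2"
    unfolding row_dist_def by (simp add: sum_nonneg)
  also have "\<dots> \<le> \<epsilon>\<^sup>2"
    using assms(2) row_dist_nonneg by (intro power_mono)
  finally show ?thesis by (simp add: mult_right_mono sum_nonneg)
qed

lemma rows_covered_by_fewer_rows:
  assumes "orthonormal_columns n m V" and "k < m"
    and "\<And>i. i < n \<Longrightarrow> \<exists>l<k. row_dist m V i W l \<le> \<epsilon>"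
  shows "1 \<le> real n * \<epsilon>\<^sup>2"
proof -
  obtain x where x_nonzero: "\<exists>j<m. x j \<noteq> 0" and W_x: "\<forall>l<k. (\<Sum>j<m. W l j * x j) = 0"
    using homogeneous_system_nontrivial_solution[OF assms(2)] by blast
  define s where "s = (\<Sum>j<m. (x j)\<^sup>2)"
  have "0 < s" unfolding s_def using x_nonzero by (meson finite_lessThan lessThan_iff sum_pos2 zero_le_power2 zero_less_power2)
  have "s = (\<Sum>i<n. (\<Sum>j<m. V i j * x j)\<^sup>2)"
    unfolding s_def by (rule orthonormal_columns_sum_square_eq[OF assms(1), symmetric])
  also have "\<dots> \<le> (\<Sum>i<n. \<epsilon>\<^sup>2 * s)"
  proof (rule sum_mono)
    fix i assume "i \<in> {..<n}"
    then obtain l where "l < k" "row_dist m V i W l \<le> \<epsilon>" using assms(3) by blast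
    then show "(\<Sum>j<m. V i j * x j)\<^sup>2 \<le> \<epsilon>\<^sup>2 * s"
      unfolding s_def using W_x by (intro square_sum_mult_le_row_dist) auto
  qed
  finally show ?thesis using \<open>0 < s\<close> by simp
qed

lemma ex_row_dist_le_Max_Min:
  assumes "0 < k" and "i < n"
  shows "\<exists>l<k. row_dist m V i W l \<le> Max ((\<lambda>i. Min ((\<lambda>l. row_dist m V i W l) ` {..<k})) ` {..<n})"
proof -
  let ?d = "Min ((\<lambda>l. row_dist m V i W l) ` {..<k})"
  have "?d \<in> (\<lambda>l. row_dist m V i W l) ` {..<k}"
    using assms(1) by (intro Min_in) auto
  moreover have "?d \<le> Max ((\<lambda>i. Min ((\<lambda>l. row_dist m V i W l) ` {..<k})) ` {..<n})"
    using assms(2) by (intro Max_ge) auto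
  ultimately show ?thesis by force
qed

lemma one_div_le_of_one_le_mult_square:
  fixes N \<epsilon> :: real
  assumes "1 \<le> N * \<epsilon>\<^sup>2" and "0 \<le> \<epsilon>" and "1 \<le> N"
  shows "1 / N \<le> \<epsilon>"
proof (cases "\<epsilon> \<le> 1")
  case True
  then have "N * \<epsilon>\<^sup>2 \<le> N * \<epsilon>"
    using assms(2,3) by (intro mult_left_mono) (auto simp: power2_eq_square mult_left_le_one_le)
  with assms(1) have "1 \<le> N * \<epsilon>" by linarith
  with assms(3) show ?thesis by (simp add: field_simps)
next
  case False
  moreover have "1 / N \<le> 1" using assms(3) by simp
  ultimately show ?thesis by linarith
qed

theorem corollary7:
  fixes n k :: nat and V W :: "nat \<Rightarrow> nat \<Rightarrow> real" and \<epsilon> :: real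
  assumes "k \<ge> 1"
    and "orthonormal_columns n (k + 1) V"
    and "\<epsilon> = Max ((\<lambda>i. Min ((\<lambda>l. row_dist (k + 1) V i W l) ` {..<k})) ` {..<n})"
  shows "\<epsilon> \<ge> 1 / (3 * real n * (real k + 1)\<^sup>2)"
proof -
  have covered: "\<exists>l<k. row_dist (k + 1) V i W l \<le> \<epsilon>" if "i < n" for i
    unfolding assms(3) using assms(1) that by (intro ex_row_dist_le_Max_Min) auto
  have bound: "1 \<le> real n * \<epsilon>\<^sup>2"
    using rows_covered_by_fewer_rows[OF assms(2) _ covered] by simp
  then have "0 < n" by (cases n) auto
  then have "0 \<le> \<epsilon>" using covered[of 0] row_dist_nonneg by (meson order_trans)
  have "1 / real n \<le> \<epsilon>"
    using bound \<open>0 \<le> \<epsilon>\<close> \<open>0 < n\<close> by (intro one_div_le_of_one_le_mult_square) auto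
  moreover have "1 / (3 * real n * (real k + 1)\<^sup>2) \<le> 1 / real n"
  proof (rule divide_left_mono)
    have "1 \<le> 3 * (real k + 1)\<^sup>2" using one_le_power[of "real k + 1" 2] by linarith
    from mult_left_mono[OF this, of "real n"]
    show "real n \<le> 3 * real n * (real k + 1)\<^sup>2" by (simp add: mult.assoc mult.left_commute)
    show "0 < 3 * real n * (real k + 1)\<^sup>2 * real n" using \<open>0 < n\<close> by simp
  qed simp
  ultimately show ?thesis by linarith
qed

end
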